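(* Let $k\geq 29$ and let $Q$ be the graph constructed below. Then $|V(Q)|=2k+1$ and $Q$ has no Hamiltonian path.
   Context: Fix an integer $k\geq 29$ and set $l=2\lfloor (k-12)/17\rfloor$, $m=\lfloor (2k-l+1)/8\rfloor$, $r=2k+1-l-8m$ (so $r\in\{1,3,5,7\}$). Let $H$ be the graph with vertex set $\{u,v,a,b,c,d,e,f\}$ and edge set $\{ub,ud,vc,ve,ab,ac,fd,fe,bc,ce,ed,db\}$. Take $m$ disjoint copies $H_1,\ldots,H_m$ of $H$, and let $u_i,v_i$ be the vertices of $H_i$ corresponding to $u,v$. Let $U=\{u_i,v_i:1\leq i\leq m\}$ and let $R$ be a set of $r$ new vertices. Let $T$ be the graph obtained from the disjoint union $H_1\cup\cdots\cup H_m$ by adding the vertices of $R$ and joining every pair of distinct vertices of $U\cup R$ by an edge (so $U\cup R$ becomes a clique). Let $L$ be a complete graph on $l$ vertices, and let $Q=L+T$ be the join of $L$ and $T$ (every vertex of $L$ adjacent to every vertex of $T$). *)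

theory Defs
  imports Main
begin

definition l_par :: "nat \<Rightarrow> nat" where
  "l_par k = 2 * ((k - 12) div 17)"
definition m_par :: "nat \<Rightarrow> nat" where
  "m_par k = (2 * k - l_par k + 1) div 8"
definition r_par :: "nat \<Rightarrow> nat" where
  "r_par k = 2 * k + 1 - l_par k - 8 * m_par k"

datatype hvert = Hu | Hv | Ha | Hb | Hc | Hd | He | Hf

definition H_edges :: "(hvert \<times> hvert) set" where
  "H_edges = {(Hu,Hb),(Hu,Hd),(Hv,Hc),(Hv,He),(Ha,Hb),(Ha,Hc),(Hf,Hd),(Hf,He),
              (Hb,Hc),(Hc,He),(He,Hd),(Hd,Hb)}"

definition H_adj :: "hvert \<Rightarrow> hvert \<Rightarrow> bool" where
  "H_adj x y \<longleftrightarrow> (x, y) \<in> H_edges \<or> (y, x) \<in> H_edges"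

text \<open>Vertices of Q: LV i (the clique L), RV i (the set R), HV i h (vertex h of copy H_i).
  Copies are indexed 0..m-1.\<close>
datatype qvert = LV nat | RV nat | HV nat hvert

definition Q_verts :: "nat \<Rightarrow> qvert set" where
  "Q_verts k = LV ` {..<l_par k} \<union> RV ` {..<r_par k} \<union> {HV i h | i h. i < m_par k}"

fun is_L :: "qvert \<Rightarrow> bool" where
  "is_L (LV _) = True" | "is_L _ = False"

fun in_UR :: "qvert \<Rightarrow> bool" where
  "in_UR (RV _) = True"
| "in_UR (HV _ h) = (h = Hu \<or> h = Hv)"
| "in_UR (LV _) = False"

fun copy_edge :: "qvert \<Rightarrow> qvert \<Rightarrow> bool" where
  "copy_edge (HV i x) (HV j y) = (i = j \<and> H_adj x y)"
| "copy_edge _ _ = False"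

definition Q_adj :: "nat \<Rightarrow> qvert \<Rightarrow> qvert \<Rightarrow> bool" where
  "Q_adj k x y \<longleftrightarrow> x \<in> Q_verts k \<and> y \<in> Q_verts k \<and> x \<noteq> y \<and>
     (is_L x \<or> is_L y \<or> copy_edge x y \<or> (in_UR x \<and> in_UR y))"

definition has_ham_path :: "'a set \<Rightarrow> ('a \<Rightarrow> 'a \<Rightarrow> bool) \<Rightarrow> bool" where
  "has_ham_path V adj \<longleftrightarrow> (\<exists>p. distinct p \<and> set p = V \<and>
     (\<forall>i. Suc i < length p \<longrightarrow> adj (p ! i) (p ! Suc i)))"

end

theory Submission
  imports Defs
begin

text \<open>Call a vertex exposed for a Hamiltonian path of Q if it is an end of the path or a
  neighbour along the path of a vertex of L; there are at most 2l + 2 exposed vertices.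
  Every copy H_i contains an exposed inner vertex (one of a, ..., f): otherwise, along the
  path, the inner vertices of H_i only meet each other and the two ports u_i, v_i, so they
  form a single segment of the path running from u_i to v_i, i.e. a Hamiltonian u-v path
  of H, which does not exist. Hence m \<le> 2l + 2, contradicting the choice of the parameters.\<close>

definition path_edges :: "'a list \<Rightarrow> ('a \<times> 'a) set" where
  "path_edges p = {(p ! j, p ! Suc j) | j. Suc j < length p}"

lemma successively_iff_path_edges:
  "successively P p \<longleftrightarrow> (\<forall>(x, y) \<in> path_edges p. P x y)"
  unfolding successively_conv_nth path_edges_def by blast

lemma path_edges_subset: "path_edges p \<subseteq> set p \<times> set p"
  unfolding path_edges_def by auto

lemma path_edges_unique:
  assumes "distinct p"
  shows "(x, y) \<in> path_edges p \<Longrightarrow> (x', y) \<in> path_edges p \<Longrightarrow> x = x'"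
    and "(x, y) \<in> path_edges p \<Longrightarrow> (x, y') \<in> path_edges p \<Longrightarrow> y = y'"
  using assms by (auto simp: path_edges_def nth_eq_iff_index_eq)

lemma card_predecessors_le:
  assumes "finite X" and unique: "\<And>x x' y. (x, y) \<in> E \<Longrightarrow> (x', y) \<in> E \<Longrightarrow> x = x'"
  shows "card {x. \<exists>y\<in>X. (x, y) \<in> E} \<le> card X"
proof -
  have "{x. \<exists>y\<in>X. (x, y) \<in> E} \<subseteq> (\<lambda>y. THE x. (x, y) \<in> E) ` X"
    using unique by (auto intro!: image_eqI the_equality[symmetric])
  then have "card {x. \<exists>y\<in>X. (x, y) \<in> E} \<le> card ((\<lambda>y. THE x. (x, y) \<in> E) ` X)"
    using assms(1) by (intro card_mono) auto
  also have "\<dots> \<le> card X"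
    by (rule card_image_le[OF assms(1)])
  finally show ?thesis .
qed

definition exposed :: "'a list \<Rightarrow> 'a set \<Rightarrow> 'a set" where
  "exposed p X = {hd p, last p} \<union> {x. \<exists>y\<in>X. (x, y) \<in> path_edges p \<or> (y, x) \<in> path_edges p}"

lemma finite_exposed: "finite (exposed p X)"
proof (rule finite_subset)
  show "exposed p X \<subseteq> {hd p, last p} \<union> set p"
    unfolding exposed_def using path_edges_subset by blast
qed simp

lemma card_exposed_le:
  assumes "distinct p" "finite X"
  shows "card (exposed p X) \<le> 2 * card X + 2"
proof -
  let ?pred = "{x. \<exists>y\<in>X. (x, y) \<in> path_edges p}"
  let ?succ = "{x. \<exists>y\<in>X. (x, y) \<in> (path_edges p)\<inverse>}"
  have "exposed p X = {hd p, last p} \<union> ?pred \<union> ?succ"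
    unfolding exposed_def by blast
  then have "card (exposed p X) \<le> card ({hd p, last p} \<union> ?pred) + card ?succ"
    by (simp only: card_Un_le)
  also have "\<dots> \<le> card {hd p, last p} + card ?pred + card ?succ"
    by (intro add_right_mono card_Un_le)
  finally have "card (exposed p X) \<le> card {hd p, last p} + card ?pred + card ?succ" .
  moreover have "card ?pred \<le> card X"
    using path_edges_unique(1)[OF assms(1)] by (intro card_predecessors_le[OF assms(2)])
  moreover have "card ?succ \<le> card X"
    using path_edges_unique(2)[OF assms(1)] by (intro card_predecessors_le[OF assms(2)]) auto
  moreover have "card {hd p, last p} \<le> 2"
    by (simp add: card_insert_le_m1)
  ultimately show ?thesis
    by linarith
qed

lemma split_list_first_last_prop:
  assumes "\<exists>v\<in>set p. P v"
  shows "\<exists>xs ys zs. p = xs @ ys @ zs \<and> ys \<noteq> [] \<and> P (hd ys) \<and> P (last ys)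
    \<and> (\<forall>v\<in>set xs. \<not> P v) \<and> (\<forall>v\<in>set zs. \<not> P v)"
proof -
  obtain xs a rest where a: "p = xs @ a # rest" "P a" "\<forall>v\<in>set xs. \<not> P v"
    using split_list_first_prop[OF assms] by blast
  obtain ys' b zs where b: "a # rest = ys' @ b # zs" "P b" "\<forall>v\<in>set zs. \<not> P v"
    using split_list_last_prop[of "a # rest" P] a(2) by auto
  have "hd (ys' @ [b]) = a"
    using b(1) by (cases ys') auto
  then show ?thesis
    using a b by (intro exI[of _ xs] exI[of _ "ys' @ [b]"] exI[of _ zs]) simp
qed

lemma closed_set_is_flanked_segment:
  assumes "distinct p" and "A \<subseteq> set p" "A \<noteq> {}" "A \<inter> B = {}" "finite B" "card B \<le> 2"
    and closed: "successively (\<lambda>x y. (x \<in> A \<longrightarrow> y \<in> A \<union> B) \<and> (y \<in> A \<longrightarrow> x \<in> A \<union> B)) p"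
    and "hd p \<notin> A" "last p \<notin> A"
  shows "\<exists>xs x ys y zs. p = xs @ x # ys @ y # zs \<and> x \<in> B \<and> y \<in> B \<and> set ys = A"
proof -
  have "\<exists>v\<in>set p. v \<in> A"
    using assms(2,3) by blast
  then obtain xs ys zs where p: "p = xs @ ys @ zs" and ys: "ys \<noteq> []" "hd ys \<in> A" "last ys \<in> A"
    and outside: "\<forall>v\<in>set xs. v \<notin> A" "\<forall>v\<in>set zs. v \<notin> A"
    using split_list_first_last_prop[of p "\<lambda>v. v \<in> A"] by blast
  have "xs \<noteq> []" "zs \<noteq> []"
    using assms(8,9) p ys by auto
  have x: "last xs \<in> B"
    using closed \<open>xs \<noteq> []\<close> ys outside(1) unfolding p by (auto simp: successively_append_iff)
  have y: "hd zs \<in> B"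
    using closed \<open>zs \<noteq> []\<close> ys outside(2) unfolding p by (auto simp: successively_append_iff)
  have "set ys \<subseteq> A"
  proof (rule ccontr)
    \<comment> \<open>a gap in the segment would give a third vertex of B on p, besides last xs and hd zs\<close>
    assume "\<not> set ys \<subseteq> A"
    then obtain us w ws where w: "ys = us @ w # ws" "w \<notin> A" "\<forall>v\<in>set us. v \<in> A"
      using split_list_first_prop[of ys "\<lambda>v. v \<notin> A"] by blast
    have "us \<noteq> []"
      using w ys(2) by auto
    then have "w \<in> B"
      using closed w unfolding p by (auto simp: successively_append_iff)
    have "card {last xs, w, hd zs} \<le> card B"
      using x y \<open>w \<in> B\<close> by (intro card_mono[OF assms(5)]) auto
    moreover have "last xs \<noteq> w" "w \<noteq> hd zs" "last xs \<noteq> hd zs"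
      using assms(1) last_in_set[OF \<open>xs \<noteq> []\<close>] hd_in_set[OF \<open>zs \<noteq> []\<close>]
      unfolding p w by auto
    then have "card {last xs, w, hd zs} = 3"
      by simp
    ultimately show False
      using assms(6) by linarith
  qed
  moreover have "A \<subseteq> set ys"
    using assms(2) outside unfolding p by auto
  ultimately have "set ys = A"
    by blast
  moreover have "p = butlast xs @ last xs # ys @ hd zs # tl zs"
    using \<open>xs \<noteq> []\<close> \<open>zs \<noteq> []\<close> unfolding p by simp
  ultimately show ?thesis
    using x y by blast
qed

lemma H_adj_simps:
  "H_adj Hu y \<longleftrightarrow> y = Hb \<or> y = Hd"
  "H_adj Hv y \<longleftrightarrow> y = Hc \<or> y = He"
  "H_adj Ha y \<longleftrightarrow> y = Hb \<or> y = Hc"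
  "H_adj Hf y \<longleftrightarrow> y = Hd \<or> y = He"
  "H_adj Hb y \<longleftrightarrow> y = Hu \<or> y = Ha \<or> y = Hc \<or> y = Hd"
  "H_adj Hc y \<longleftrightarrow> y = Hv \<or> y = Ha \<or> y = Hb \<or> y = He"
  "H_adj Hd y \<longleftrightarrow> y = Hu \<or> y = Hf \<or> y = He \<or> y = Hb"
  "H_adj He y \<longleftrightarrow> y = Hv \<or> y = Hf \<or> y = Hc \<or> y = Hd"
  by (cases y; auto simp: H_adj_def H_edges_def)+

lemma H_adj_commute: "H_adj x y \<longleftrightarrow> H_adj y x"
  unfolding H_adj_def by auto

lemma UNIV_hvert: "UNIV = {Hu, Hv, Ha, Hb, Hc, Hd, He, Hf}"
  by (auto intro: hvert.exhaust)

lemma H_interior_eq: "- {Hu, Hv} = {Ha, Hb, Hc, Hd, He, Hf}"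
  by (auto intro: hvert.exhaust)

lemma no_hamiltonian_Hu_Hv_path:
  assumes "distinct hs" "set hs = - {Hu, Hv}" "successively H_adj hs"
    "H_adj Hu (hd hs)" "H_adj (last hs) Hv"
  shows False
proof -
  have "length hs = 6"
    using distinct_card[OF assms(1)] assms(2) by (simp add: H_interior_eq)
  then obtain h0 h1 h2 h3 h4 h5 where hs: "hs = [h0, h1, h2, h3, h4, h5]"
    by (auto simp: numeral_eq_Suc length_Suc_conv)
  have "{h0, h1, h2, h3, h4, h5} \<inter> {Hu, Hv} = {}"
    using assms(2) unfolding hs by auto
  then show False
    using assms(1,3-5) unfolding hs by (auto simp: H_adj_simps)
qed

lemma no_hamiltonian_port_path:
  assumes "distinct hs" "set hs = - {Hu, Hv}" "successively H_adj hs"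
    "{x, y} = {Hu, Hv}" "H_adj x (hd hs)" "H_adj (last hs) y"
  shows False
proof (cases "x = Hu")
  case True
  then have "y = Hv"
    using assms(4) by (auto simp: doubleton_eq_iff)
  then show False
    using no_hamiltonian_Hu_Hv_path[OF assms(1-3)] assms(5,6) True by simp
next
  case False
  then have "x = Hv" "y = Hu"
    using assms(4) by (auto simp: doubleton_eq_iff)
  moreover have "hs \<noteq> []"
    using assms(2) by (cases hs) (simp_all add: H_interior_eq)
  moreover have "successively H_adj (rev hs)"
    unfolding successively_rev by (rule successively_mono[OF assms(3)]) (simp add: H_adj_commute)
  moreover have "H_adj Hu (hd (rev hs))"
    using assms(6) \<open>y = Hu\<close> \<open>hs \<noteq> []\<close> by (simp add: hd_rev H_adj_commute[of Hu])
  moreover have "H_adj (last (rev hs)) Hv"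
    using assms(5) \<open>x = Hv\<close> \<open>hs \<noteq> []\<close> by (simp add: last_rev H_adj_commute[of _ Hv])
  ultimately show False
    using no_hamiltonian_Hu_Hv_path[of "rev hs"] assms(1,2) by simp
qed

lemma Q_adj_commute: "Q_adj k x y \<longleftrightarrow> Q_adj k y x"
  by (cases x; cases y) (auto simp: Q_adj_def H_adj_commute)

lemma Q_adj_from_interior:
  assumes "Q_adj k (HV i h) y" "h \<notin> {Hu, Hv}" "\<not> is_L y"
  shows "\<exists>h'. y = HV i h' \<and> H_adj h h'"
  using assms by (cases y) (auto simp: Q_adj_def)

lemma no_Q_path_through_copy_between_ports:
  assumes "distinct (x # ys @ [y])" "successively (Q_adj k) (x # ys @ [y])"
    and "x \<in> HV i ` {Hu, Hv}" "y \<in> HV i ` {Hu, Hv}" "set ys = HV i ` (- {Hu, Hv})"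
  shows False
proof -
  obtain hs where ys: "ys = map (HV i) hs"
    using assms(5) ex_map_conv[of ys "HV i"] by auto
  have interior: "h \<notin> {Hu, Hv}" if "h \<in> set hs" for h
    using that assms(5) unfolding ys by auto
  have "hs \<noteq> []"
    using assms(5) unfolding ys by (cases hs) (auto simp: H_interior_eq)
  have "distinct hs" "set hs = - {Hu, Hv}"
    using assms(1,5) unfolding ys by (auto simp: distinct_map inj_image_eq_iff)
  have "successively H_adj hs"
  proof -
    have "successively (\<lambda>a b. Q_adj k (HV i a) (HV i b)) hs"
      using assms(2) unfolding ys by (simp add: successively_Cons successively_append_iff successively_map)
    then show ?thesis
      by (rule successively_mono) (use Q_adj_from_interior interior in fastforce)
  qed
  obtain u v where uv: "x = HV i u" "y = HV i v" "{u, v} = {Hu, Hv}"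
    using assms(1,3,4) by auto
  have "Q_adj k (HV i u) (HV i (hd hs))" "Q_adj k (HV i (last hs)) (HV i v)"
    using assms(2) \<open>hs \<noteq> []\<close> unfolding ys uv
    by (auto simp: successively_append_iff successively_Cons hd_map last_map)
  then have "H_adj u (hd hs)" "H_adj (last hs) v"
    using Q_adj_from_interior interior \<open>hs \<noteq> []\<close>
    by (fastforce simp: Q_adj_commute H_adj_commute)+
  then show False
    using no_hamiltonian_port_path \<open>distinct hs\<close> \<open>set hs = - {Hu, Hv}\<close>
      \<open>successively H_adj hs\<close> uv(3) by blast
qed

lemma copy_interior_exposed:
  assumes "distinct p" "set p = Q_verts k" "successively (Q_adj k) p" "i < m_par k"
  shows "\<exists>h. h \<notin> {Hu, Hv} \<and> HV i h \<in> exposed p (LV ` {..<l_par k})"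
proof (rule ccontr)
  let ?X = "LV ` {..<l_par k}"
  define A where "A = HV i ` (- {Hu, Hv})"
  define B where "B = HV i ` {Hu, Hv}"
  assume "\<not> ?thesis"
  then have sealed: "x \<notin> exposed p ?X" if "x \<in> A" for x
    using that unfolding A_def by auto
  have step: "y \<in> A \<union> B" if "(x, y) \<in> path_edges p \<or> (y, x) \<in> path_edges p" "x \<in> A" for x y
  proof -
    have "y \<notin> ?X"
      using sealed[OF \<open>x \<in> A\<close>] that(1) unfolding exposed_def by blast
    moreover have "y \<in> Q_verts k"
      using that(1) path_edges_subset assms(2) by blast
    ultimately have "\<not> is_L y"
      unfolding Q_verts_def by (cases y) auto
    moreover have "Q_adj k x y"
      using that(1) assms(3) unfolding successively_iff_path_edges by (auto simp: Q_adj_commute)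
    ultimately obtain h' where "y = HV i h'"
      using Q_adj_from_interior \<open>x \<in> A\<close> unfolding A_def by blast
    then show ?thesis
      unfolding A_def B_def by auto
  qed
  have closed: "successively (\<lambda>x y. (x \<in> A \<longrightarrow> y \<in> A \<union> B) \<and> (y \<in> A \<longrightarrow> x \<in> A \<union> B)) p"
    unfolding successively_iff_path_edges using step by blast
  have ends: "hd p \<notin> A" "last p \<notin> A"
    using sealed unfolding exposed_def by auto
  have "A \<subseteq> set p"
    using assms(2,4) unfolding A_def Q_verts_def by auto
  moreover have "A \<noteq> {}" "A \<inter> B = {}" "finite B" "card B \<le> 2"
    unfolding A_def B_def by (auto simp: card_insert_le_m1)
  ultimately obtain xs x ys y zs where
    seg: "p = xs @ x # ys @ y # zs" "x \<in> B" "y \<in> B" "set ys = A"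
    using closed_set_is_flanked_segment[OF assms(1) _ _ _ _ _ closed ends] by blast
  have "ys \<noteq> []"
    using seg(4) unfolding A_def by auto
  then have "distinct (x # ys @ [y])" "successively (Q_adj k) (x # ys @ [y])"
    using assms(1,3) unfolding seg(1) by (auto simp: successively_append_iff successively_Cons)
  then show False
    using no_Q_path_through_copy_between_ports seg(2-4) unfolding A_def B_def by blast
qed

lemma l_par_r_par_m_par_sum:
  assumes "k \<ge> 29"
  shows "l_par k + r_par k + 8 * m_par k = 2 * k + 1"
proof -
  have "17 * ((k - 12) div 17) \<le> k - 12" "8 * m_par k \<le> 2 * k - l_par k + 1"
    unfolding m_par_def by simp_all
  moreover have "l_par k = 2 * ((k - 12) div 17)"
    unfolding l_par_def ..
  ultimately show ?thesis
    using assms unfolding r_par_def by linarith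
qed

lemma m_par_gt_2_l_par:
  assumes "k \<ge> 29"
  shows "2 * l_par k + 2 < m_par k"
proof -
  have "17 * ((k - 12) div 17) \<le> k - 12" "2 * k - l_par k + 1 < 8 * m_par k + 8"
    unfolding m_par_def by simp_all
  moreover have "l_par k = 2 * ((k - 12) div 17)"
    unfolding l_par_def ..
  ultimately show ?thesis
    using assms by linarith
qed

lemma card_Q_verts:
  assumes "k \<ge> 29"
  shows "card (Q_verts k) = 2 * k + 1"
proof -
  have copies: "{HV i h | i h. i < m_par k} = (\<lambda>(i, h). HV i h) ` ({..<m_par k} \<times> UNIV)"
    by auto
  have "card (UNIV :: hvert set) = 8"
    by (simp add: UNIV_hvert)
  then have "card {HV i h | i h. i < m_par k} = 8 * m_par k"
    unfolding copies by (subst card_image) (auto simp: inj_on_def card_cartesian_product)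
  moreover have "finite {HV i h | i h. i < m_par k}"
    unfolding copies by (intro finite_imageI finite_cartesian_product) (auto simp: UNIV_hvert)
  moreover have "card (LV ` {..<l_par k} \<union> RV ` {..<r_par k}) = l_par k + r_par k"
    by (subst card_Un_disjoint) (auto simp: card_image inj_on_def)
  moreover have "card (Q_verts k)
      = card (LV ` {..<l_par k} \<union> RV ` {..<r_par k}) + card {HV i h | i h. i < m_par k}"
    unfolding Q_verts_def by (rule card_Un_disjoint) (use \<open>finite {HV i h | i h. i < m_par k}\<close> in auto)
  ultimately show ?thesis
    using l_par_r_par_m_par_sum[OF assms] by simp
qed

theorem lemma5p4:
  fixes k :: nat
  assumes "k \<ge> 29"
  shows "card (Q_verts k) = 2 * k + 1 \<and> \<not> has_ham_path (Q_verts k) (Q_adj k)"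
proof
  show "card (Q_verts k) = 2 * k + 1"
    using card_Q_verts[OF assms] .
  show "\<not> has_ham_path (Q_verts k) (Q_adj k)"
  proof
    assume "has_ham_path (Q_verts k) (Q_adj k)"
    then obtain p where p: "distinct p" "set p = Q_verts k" "successively (Q_adj k) p"
      unfolding has_ham_path_def successively_conv_nth by blast
    let ?X = "LV ` {..<l_par k}"
    obtain w where w: "\<And>i. i < m_par k \<Longrightarrow> w i \<notin> {Hu, Hv} \<and> HV i (w i) \<in> exposed p ?X"
      using copy_interior_exposed[OF p] by metis
    have "m_par k \<le> card (exposed p ?X)"
      using w finite_exposed
      by (intro card_inj_on_le[of "\<lambda>i. HV i (w i)" "{..<m_par k}", simplified]) (auto simp: inj_on_def)
    also have "\<dots> \<le> 2 * l_par k + 2"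
      using card_exposed_le[OF p(1), of ?X] by (simp add: card_image inj_on_def)
    finally show False
      using m_par_gt_2_l_par[OF assms] by linarith
  qed
qed

end
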